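(* Let $(X,u)$ and $(Y,v)$ be Čech closure spaces, let $Y^X$ be the set of all continuous maps $(X,u)\to(Y,v)$, let $(f_\lambda)_{\lambda\in\Lambda}$ be a net in $Y^X$ and $f\in Y^X$. Then $(f_\lambda)$ converges continuously to $f$ if and only if $$\overline{\lim_{\Lambda}}\, f_\lambda^{-1}(B)\subset f^{-1}(v(B))\quad\text{for every subset } B\subset Y.$$
   Context: A Čech closure space $(X,u)$ is a set $X$ with an operator $u:\mathcal P(X)\to\mathcal P(X)$ satisfying $u(\emptyset)=\emptyset$, $A\subset u(A)$, and $u(A\cup B)=u(A)\cup u(B)$. The interior is $\mathrm{int}_u A=X\setminus u(X\setminus A)$; $U$ is a neighbourhood of $x$ if $x\in\mathrm{int}_uU$. A map $f:(X,u)\to(Y,v)$ is continuous if $f(u(A))\subset v(f(A))$ for all $A\subset X$. A net $(x_\mu)_{\mu\in M}$ converges to $x$ if for every neighbourhood $U$ of $x$ there is $\mu_0$ with $x_\mu\in U$ for all $\mu\ge\mu_0$. A net $(f_\lambda)_{\lambda\in\Lambda}$ in $Y^X$ converges continuously to $f\in Y^X$ if, whenever a net $(x_\mu)_{\mu\in M}$ converges to $x$ in $(X,u)$, the net $(f_\lambda(x_\mu))_{(\lambda,\mu)\in\Lambda\times M}$ (coordinatewise order) converges to $f(x)$ in $(Y,v)$. For a net $(A_\lambda)_{\lambda\in\Lambda}$ of subsets of $X$, its upper limit $\overline{\lim_{\Lambda}}A_\lambda$ is the set of all $x\in X$ such that for every $\lambda_0\in\Lambda$ and every neighbourhood $U$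 of $x$ there is $\lambda\ge\lambda_0$ with $A_\lambda\cap U\ne\emptyset$. *)

theory Defs
  imports Main
begin

text \<open>Cech closure space on the carrier type 'a (the set X is the whole type).\<close>
definition cech_closure :: "('a set \<Rightarrow> 'a set) \<Rightarrow> bool" where
  "cech_closure u \<longleftrightarrow> u {} = {} \<and> (\<forall>A. A \<subseteq> u A) \<and> (\<forall>A B. u (A \<union> B) = u A \<union> u B)"

definition cl_interior :: "('a set \<Rightarrow> 'a set) \<Rightarrow> 'a set \<Rightarrow> 'a set" where
  "cl_interior u A = - u (- A)"

definition is_nbhd :: "('a set \<Rightarrow> 'a set) \<Rightarrow> 'a set \<Rightarrow> 'a \<Rightarrow> bool" where
  "is_nbhd u U x \<longleftrightarrow> x \<in> cl_interior u U"

definition cl_continuous :: "('a set \<Rightarrow> 'a set) \<Rightarrow> ('b set \<Rightarrow> 'b set) \<Rightarrow> ('a \<Rightarrow> 'b) \<Rightarrow> bool" where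
  "cl_continuous u v f \<longleftrightarrow> (\<forall>A. f ` u A \<subseteq> v (f ` A))"

definition directed :: "'i set \<Rightarrow> ('i \<Rightarrow> 'i \<Rightarrow> bool) \<Rightarrow> bool" where
  "directed I le \<longleftrightarrow> I \<noteq> {} \<and> (\<forall>i\<in>I. le i i)
     \<and> (\<forall>i\<in>I. \<forall>j\<in>I. \<forall>k\<in>I. le i j \<and> le j k \<longrightarrow> le i k)
     \<and> (\<forall>i\<in>I. \<forall>j\<in>I. \<exists>k\<in>I. le i k \<and> le j k)"

definition net_conv :: "('a set \<Rightarrow> 'a set) \<Rightarrow> 'i set \<Rightarrow> ('i \<Rightarrow> 'i \<Rightarrow> bool) \<Rightarrow> ('i \<Rightarrow> 'a) \<Rightarrow> 'a \<Rightarrow> bool" where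
  "net_conv u M le xs x \<longleftrightarrow>
     (\<forall>U. is_nbhd u U x \<longrightarrow> (\<exists>m0\<in>M. \<forall>m\<in>M. le m0 m \<longrightarrow> xs m \<in> U))"

definition prod_le :: "('i \<Rightarrow> 'i \<Rightarrow> bool) \<Rightarrow> ('j \<Rightarrow> 'j \<Rightarrow> bool) \<Rightarrow> 'i \<times> 'j \<Rightarrow> 'i \<times> 'j \<Rightarrow> bool" where
  "prod_le le1 le2 p q \<longleftrightarrow> le1 (fst p) (fst q) \<and> le2 (snd p) (snd q)"

text \<open>Continuous convergence, where the test nets (x_mu) range over all directed sets
  whose elements are taken from the index type 'm.\<close>
definition cont_conv :: "'m itself \<Rightarrow> ('a set \<Rightarrow> 'a set) \<Rightarrow> ('b set \<Rightarrow> 'b set) \<Rightarrow> 'l set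
    \<Rightarrow> ('l \<Rightarrow> 'l \<Rightarrow> bool) \<Rightarrow> ('l \<Rightarrow> 'a \<Rightarrow> 'b) \<Rightarrow> ('a \<Rightarrow> 'b) \<Rightarrow> bool" where
  "cont_conv _ u v L le fs f \<longleftrightarrow>
     (\<forall>(M::'m set) leM xs x. directed M leM \<and> net_conv u M leM xs x \<longrightarrow>
        net_conv v (L \<times> M) (prod_le le leM) (\<lambda>p. fs (fst p) (xs (snd p))) (f x))"

definition upper_limit :: "('a set \<Rightarrow> 'a set) \<Rightarrow> 'l set \<Rightarrow> ('l \<Rightarrow> 'l \<Rightarrow> bool) \<Rightarrow> ('l \<Rightarrow> 'a set) \<Rightarrow> 'a set" where
  "upper_limit u L le A = {x. \<forall>l0\<in>L. \<forall>U. is_nbhd u U x \<longrightarrow> (\<exists>l\<in>L. le l0 l \<and> A l \<inter> U \<noteq> {})}"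

end

theory Submission
  imports Defs
begin

(* If x lies in the upper limit of the sets f_l^-1(B), then for every index l and every
   neighbourhood U of x one can pick l' >= l and a point x_(l,U) in U with f_l'(x_(l,U)) in B.
   Indexed by the pairs (l, U), these points form a net converging to x, so continuous
   convergence forces the values f_l'(x_(l,U)) to lie eventually in every neighbourhood of f(x);
   since they lie in B cofinally, no neighbourhood of f(x) misses B, i.e. f(x) is in v(B).
   Conversely, if f_l(x_m) does not lie eventually in a neighbourhood V of f(x), it lies
   cofinally in Y - V, which puts x into the upper limit of the sets f_l^-1(Y - V); hence f(x)
   is in v(Y - V), contradicting that V is a neighbourhood of f(x). *)

lemma is_nbhd_iff: "is_nbhd u V x \<longleftrightarrow> x \<notin> u (- V)"
  unfolding is_nbhd_def cl_interior_def by simp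

lemma is_nbhd_UNIV: "cech_closure u \<Longrightarrow> is_nbhd u UNIV x"
  unfolding is_nbhd_iff cech_closure_def by simp

lemma is_nbhd_Int:
  assumes "cech_closure u" and "is_nbhd u U x" and "is_nbhd u V x"
  shows "is_nbhd u (U \<inter> V) x"
proof -
  have "u (- U \<union> - V) = u (- U) \<union> u (- V)"
    using assms(1) unfolding cech_closure_def by blast
  then show ?thesis using assms(2,3) unfolding is_nbhd_iff by simp
qed

lemma directed_le_trans:
  "\<lbrakk>directed I le; i \<in> I; j \<in> I; k \<in> I; le i j; le j k\<rbrakk> \<Longrightarrow> le i k"
  unfolding directed_def by blast

lemma directed_upper_bound:
  assumes "directed I le" and "i \<in> I" and "j \<in> I"
  obtains k where "k \<in> I" and "le i k" and "le j k"
  using assms unfolding directed_def by blast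

definition nbhd_net_index :: "('a set \<Rightarrow> 'a set) \<Rightarrow> 'l set \<Rightarrow> 'a \<Rightarrow> ('l \<times> 'a set) set" where
  "nbhd_net_index u L x = L \<times> {U. is_nbhd u U x}"

definition nbhd_net_le :: "('l \<Rightarrow> 'l \<Rightarrow> bool) \<Rightarrow> 'l \<times> 'a set \<Rightarrow> 'l \<times> 'a set \<Rightarrow> bool" where
  "nbhd_net_le le p q \<longleftrightarrow> le (fst p) (fst q) \<and> snd q \<subseteq> snd p"

lemma mem_nbhd_net_index: "p \<in> nbhd_net_index u L x \<longleftrightarrow> fst p \<in> L \<and> is_nbhd u (snd p) x"
  unfolding nbhd_net_index_def by (simp add: mem_Times_iff)

lemma directed_nbhd_net_index:
  assumes u: "cech_closure u" and L: "directed L le"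
  shows "directed (nbhd_net_index u L x) (nbhd_net_le le)"
  unfolding directed_def
proof (intro conjI ballI impI)
  obtain l where "l \<in> L" using L unfolding directed_def by blast
  then have "(l, UNIV) \<in> nbhd_net_index u L x"
    by (simp add: mem_nbhd_net_index is_nbhd_UNIV[OF u])
  then show "nbhd_net_index u L x \<noteq> {}" by blast
next
  fix p assume "p \<in> nbhd_net_index u L x"
  then show "nbhd_net_le le p p"
    using L unfolding directed_def mem_nbhd_net_index nbhd_net_le_def by blast
next
  fix p q r assume "p \<in> nbhd_net_index u L x" "q \<in> nbhd_net_index u L x"
    "r \<in> nbhd_net_index u L x" "nbhd_net_le le p q \<and> nbhd_net_le le q r"
  then show "nbhd_net_le le p r"
    unfolding mem_nbhd_net_index nbhd_net_le_def by (meson L directed_le_trans subset_trans)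
next
  fix p q assume p: "p \<in> nbhd_net_index u L x" and q: "q \<in> nbhd_net_index u L x"
  then obtain k where k: "k \<in> L" "le (fst p) k" "le (fst q) k"
    using directed_upper_bound[OF L] unfolding mem_nbhd_net_index by metis
  have "is_nbhd u (snd p \<inter> snd q) x"
    using is_nbhd_Int[OF u] p q unfolding mem_nbhd_net_index by blast
  with k show "\<exists>r\<in>nbhd_net_index u L x. nbhd_net_le le p r \<and> nbhd_net_le le q r"
    by (intro bexI[of _ "(k, snd p \<inter> snd q)"]) (simp_all add: mem_nbhd_net_index nbhd_net_le_def)
qed

lemma net_conv_nbhd_net_index:
  assumes "L \<noteq> {}" and "\<forall>p\<in>nbhd_net_index u L x. xs p \<in> snd p"
  shows "net_conv u (nbhd_net_index u L x) (nbhd_net_le le) xs x"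
  unfolding net_conv_def
proof (intro allI impI)
  fix U assume "is_nbhd u U x"
  moreover obtain l where "l \<in> L" using assms(1) by blast
  ultimately show "\<exists>m0\<in>nbhd_net_index u L x. \<forall>m\<in>nbhd_net_index u L x.
      nbhd_net_le le m0 m \<longrightarrow> xs m \<in> U"
    using assms(2) by (intro bexI[of _ "(l, U)"]) (auto simp: mem_nbhd_net_index nbhd_net_le_def)
qed

lemma upper_limit_choice:
  assumes "x \<in> upper_limit u L le A"
  obtains l' xs where "\<forall>p\<in>nbhd_net_index u L x.
    l' p \<in> L \<and> le (fst p) (l' p) \<and> xs p \<in> snd p \<and> xs p \<in> A (l' p)"
proof -
  have "\<exists>q. fst q \<in> L \<and> le (fst p) (fst q) \<and> snd q \<in> snd p \<and> snd q \<in> A (fst q)"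
    if p: "p \<in> nbhd_net_index u L x" for p
  proof -
    obtain l y where "l \<in> L" "le (fst p) l" "y \<in> A l" "y \<in> snd p"
      using assms p unfolding upper_limit_def mem_nbhd_net_index by blast
    then show ?thesis by (intro exI[of _ "(l, y)"]) simp
  qed
  then obtain g where "\<forall>p\<in>nbhd_net_index u L x.
      fst (g p) \<in> L \<and> le (fst p) (fst (g p)) \<and> snd (g p) \<in> snd p \<and> snd (g p) \<in> A (fst (g p))"
    by metis
  then show thesis by (rule that[of "fst \<circ> g" "snd \<circ> g", unfolded comp_def])
qed

lemma mem_closure_if_net_conv_frequently:
  assumes "net_conv v M le ys y" and "\<forall>m0\<in>M. \<exists>m\<in>M. le m0 m \<and> ys m \<in> B"
  shows "y \<in> v B"
proof (rule ccontr)
  assume "y \<notin> v B"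
  then have "is_nbhd v (- B) y" by (simp add: is_nbhd_iff)
  then obtain m0 where "m0 \<in> M" and "\<forall>m\<in>M. le m0 m \<longrightarrow> ys m \<notin> B"
    using assms(1) unfolding net_conv_def by blast
  with assms(2) show False by blast
qed

lemma upper_limit_vimage_subset_if_cont_conv:
  fixes u :: "'a set \<Rightarrow> 'a set" and L :: "'l set"
  assumes u: "cech_closure u" and L: "directed L le"
    and conv: "cont_conv TYPE('l \<times> 'a set) u v L le fs f"
  shows "upper_limit u L le (\<lambda>l. fs l -` B) \<subseteq> f -` v B"
proof
  fix x assume "x \<in> upper_limit u L le (\<lambda>l. fs l -` B)"
  then obtain l' xs where choice: "\<forall>p\<in>nbhd_net_index u L x.
      l' p \<in> L \<and> le (fst p) (l' p) \<and> xs p \<in> snd p \<and> fs (l' p) (xs p) \<in> B"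
    by (auto elim: upper_limit_choice)
  have "L \<noteq> {}" using L unfolding directed_def by blast
  with choice have "directed (nbhd_net_index u L x) (nbhd_net_le le)
      \<and> net_conv u (nbhd_net_index u L x) (nbhd_net_le le) xs x"
    by (simp add: directed_nbhd_net_index[OF u L] net_conv_nbhd_net_index)
  then have image_conv: "net_conv v (L \<times> nbhd_net_index u L x) (prod_le le (nbhd_net_le le))
      (\<lambda>p. fs (fst p) (xs (snd p))) (f x)"
    by (rule conv[unfolded cont_conv_def, rule_format])
  have frequently_in_B: "\<exists>p\<in>L \<times> nbhd_net_index u L x. prod_le le (nbhd_net_le le) p0 p \<and> fs (fst p) (xs (snd p)) \<in> B"
    if "p0 \<in> L \<times> nbhd_net_index u L x" for p0
  proof -
    from that obtain l0 m0 where p0: "p0 = (l0, m0)" "l0 \<in> L" "m0 \<in> nbhd_net_index u L x"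
      by (cases p0) simp
    obtain k where k: "k \<in> L" "le l0 k" "le (fst m0) k"
      using directed_upper_bound[OF L] p0 unfolding mem_nbhd_net_index by metis
    define m where "m = (k, snd m0)"
    have m: "m \<in> nbhd_net_index u L x" "nbhd_net_le le m0 m"
      using p0(3) k unfolding m_def mem_nbhd_net_index nbhd_net_le_def by simp_all
    from choice m(1) have l': "l' m \<in> L" "le (fst m) (l' m)" and "fs (l' m) (xs m) \<in> B"
      by blast+
    moreover have "le l0 (l' m)"
      using directed_le_trans[OF L p0(2) k(1) l'(1) k(2)] l'(2) by (simp add: m_def)
    ultimately show ?thesis
      using m by (intro bexI[of _ "(l' m, m)"]) (simp_all add: p0(1) prod_le_def)
  qed
  show "x \<in> f -` v B"
    using mem_closure_if_net_conv_frequently[OF image_conv] frequently_in_B by simp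
qed

lemma upper_limit_vimage_Compl_if_not_eventually:
  assumes conv: "net_conv u M leM xs x"
    and not_eventually: "\<not> (\<exists>p0\<in>L \<times> M. \<forall>p\<in>L \<times> M. prod_le le leM p0 p \<longrightarrow> fs (fst p) (xs (snd p)) \<in> V)"
  shows "x \<in> upper_limit u L le (\<lambda>l. fs l -` (- V))"
  unfolding upper_limit_def
proof (intro CollectI ballI allI impI)
  fix l0 U assume l0: "l0 \<in> L" and "is_nbhd u U x"
  then obtain m0 where m0: "m0 \<in> M" and eventually_U: "\<forall>m\<in>M. leM m0 m \<longrightarrow> xs m \<in> U"
    using conv unfolding net_conv_def by blast
  from not_eventually l0 m0 obtain l m where "l \<in> L" "m \<in> M" "le l0 l" "leM m0 m"
      and "fs l (xs m) \<notin> V"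
    unfolding prod_le_def by fastforce
  with eventually_U show "\<exists>l\<in>L. le l0 l \<and> fs l -` (- V) \<inter> U \<noteq> {}" by blast
qed

lemma cont_conv_if_upper_limit_vimage_subset:
  assumes "\<forall>B. upper_limit u L le (\<lambda>l. fs l -` B) \<subseteq> f -` v B"
  shows "cont_conv TYPE('m) u v L le fs f"
  unfolding cont_conv_def
proof (intro allI impI)
  fix M :: "'m set" and leM xs x
  assume "directed M leM \<and> net_conv u M leM xs x"
  then have conv: "net_conv u M leM xs x" by blast
  show "net_conv v (L \<times> M) (prod_le le leM) (\<lambda>p. fs (fst p) (xs (snd p))) (f x)"
    unfolding net_conv_def
  proof (intro allI impI, rule ccontr)
    fix V assume V: "is_nbhd v V (f x)"
      and not_eventually: "\<not> (\<exists>p0\<in>L \<times> M. \<forall>p\<in>L \<times> M. prod_le le leM p0 p \<longrightarrow> fs (fst p) (xs (snd p)) \<in> V)"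
    from not_eventually have "x \<in> upper_limit u L le (\<lambda>l. fs l -` (- V))"
      by (rule upper_limit_vimage_Compl_if_not_eventually[OF conv])
    with assms have "f x \<in> v (- V)" by blast
    with V show False by (simp add: is_nbhd_iff)
  qed
qed

theorem theorem3:
  fixes u :: "'a set \<Rightarrow> 'a set" and v :: "'b set \<Rightarrow> 'b set"
    and L :: "'l set" and le :: "'l \<Rightarrow> 'l \<Rightarrow> bool"
    and fs :: "'l \<Rightarrow> 'a \<Rightarrow> 'b" and f :: "'a \<Rightarrow> 'b"
  assumes "cech_closure u" and "cech_closure v"
    and "directed L le"
    and "\<forall>l\<in>L. cl_continuous u v (fs l)"
    and "cl_continuous u v f"
  shows "(cont_conv TYPE('m) u v L le fs f \<and> cont_conv TYPE('l \<times> 'a set) u v L le fs f)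
     \<longleftrightarrow> (\<forall>B. upper_limit u L le (\<lambda>l. fs l -` B) \<subseteq> f -` v B)"
proof
  assume "cont_conv TYPE('m) u v L le fs f \<and> cont_conv TYPE('l \<times> 'a set) u v L le fs f"
  then have "cont_conv TYPE('l \<times> 'a set) u v L le fs f" by blast
  then show "\<forall>B. upper_limit u L le (\<lambda>l. fs l -` B) \<subseteq> f -` v B"
    by (intro allI upper_limit_vimage_subset_if_cont_conv[OF assms(1,3)])
next
  assume "\<forall>B. upper_limit u L le (\<lambda>l. fs l -` B) \<subseteq> f -` v B"
  then show "cont_conv TYPE('m) u v L le fs f \<and> cont_conv TYPE('l \<times> 'a set) u v L le fs f"
    by (simp add: cont_conv_if_upper_limit_vimage_subset)
qed

end
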